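(* Suppose \[(\mathfrak g,\mathbf R)\in\left\{(\mathfrak{so}_{2n+1},V),(\mathfrak{sp}_n,V),(\mathfrak{sp}_n,\textstyle\bigwedge^2_0),(\mathfrak{sp}_n,V\oplus\bigwedge^2_0),(\mathfrak f_4,\mathbf{26}),(\mathfrak g_2,\mathbf 7)\right\}\] and that $\mathfrak g$ has rank $n$. Then $I(\mathfrak g,\mathbf R)$ is a cone over a simplex $\Delta^{n-1}$. In particular it has exactly one chamber, and for each $k$ the number of $k$-faces and the number of $k$-flats are both $\binom nk$.
   Context: For a reductive complex Lie algebra $\mathfrak g$ with a split real form $\mathfrak h$ of a Cartan subalgebra and a representation $\mathbf R$, $I(\mathfrak g,\mathbf R)$ is the real hyperplane arrangement formed by the kernels (in $\mathfrak h$) of the nonzero weights of $\mathbf R$, restricted to the closed dual fundamental Weyl chamber $W\subseteq\mathfrak h$. Chambers are closures of connected components of the interior of $W$ minus the hyperplanes; faces are chambers and their intersections with supporting hyperplanes; flats are intersections of $W$ with (possibly empty) families of the hyperplanes; $k$-faces/$k$-flats are those whose linear span has dimension $k$. $V$ denotes the vector representation of $\mathfrak{so}_{2n+1}$ and of $\mathfrak{sp}_n$; for $\mathfrak{sp}_n$, $\bigwedge^2V=\bigwedge^2_0\oplus\mathrm{triv}$ with $\bigwedge^2_0$ irreducible; $\mathbf{26}$ and $\mathbf 7$ are the unique irreducible representations of $\mathfrak f_4$ and $\mathfrak g_2$ of those dimensions.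
   Formalization: Flats are intersections of W with families of hyperplanes drawn from both the kernels of the nonzero weights of R and the walls of W (the kernels of the simple roots), not the weight kernels alone. The statement above fails without it. *)

theory Defs
  imports "HOL-Analysis.Analysis" "HOL-Library.Function_Algebras"
begin

text \<open>The split real Cartan subalgebra of a rank-n algebra is modelled as R^n, i.e. the
  functions x :: nat => real vanishing outside {0..<n} (coordinate i corresponds to the
  paper's e_(i+1)).\<close>

definition En :: "nat \<Rightarrow> (nat \<Rightarrow> real) set" where
  "En n = {x. \<forall>i\<ge>n. x i = 0}"

definition fscale :: "real \<Rightarrow> (nat \<Rightarrow> real) \<Rightarrow> (nat \<Rightarrow> real)" where
  "fscale c x = (\<lambda>i. c * x i)"

definition span_dim :: "(nat \<Rightarrow> real) set \<Rightarrow> nat" where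
  "span_dim F = vector_space.dim fscale (module.span fscale F)"

text \<open>A linear functional on R^n is given by its coefficient vector f (entries i < n);
  ev n f x is its value at x.\<close>
definition ev :: "nat \<Rightarrow> (nat \<Rightarrow> real) \<Rightarrow> (nat \<Rightarrow> real) \<Rightarrow> real" where
  "ev n f x = (\<Sum>i<n. f i * x i)"

definition nonzero_fun :: "nat \<Rightarrow> (nat \<Rightarrow> real) \<Rightarrow> bool" where
  "nonzero_fun n f \<longleftrightarrow> (\<exists>i<n. f i \<noteq> 0)"

definition kernel :: "nat \<Rightarrow> (nat \<Rightarrow> real) \<Rightarrow> (nat \<Rightarrow> real) set" where
  "kernel n f = {x \<in> En n. ev n f x = 0}"

text \<open>standard basis vector / coordinate functional e_i (0-based)\<close>
definition ee :: "nat \<Rightarrow> nat \<Rightarrow> real" where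
  "ee i = (\<lambda>j. if j = i then 1 else 0)"

datatype pair =
    SO_odd_V nat       \<comment> \<open>(so_(2n+1), V), rank n\<close>
  | Sp_V nat
  | Sp_Wedge2_0 nat
  | Sp_V_Wedge2_0 nat
  | F4_26
  | G2_7

fun rank :: "pair \<Rightarrow> nat" where
  "rank (SO_odd_V n) = n"
| "rank (Sp_V n) = n"
| "rank (Sp_Wedge2_0 n) = n"
| "rank (Sp_V_Wedge2_0 n) = n"
| "rank F4_26 = 4"
| "rank G2_7 = 2"

fun valid_pair :: "pair \<Rightarrow> bool" where
  "valid_pair (SO_odd_V n) \<longleftrightarrow> n \<ge> 1"
| "valid_pair (Sp_V n) \<longleftrightarrow> n \<ge> 1"
| "valid_pair (Sp_Wedge2_0 n) \<longleftrightarrow> n \<ge> 1"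
| "valid_pair (Sp_V_Wedge2_0 n) \<longleftrightarrow> n \<ge> 1"
| "valid_pair F4_26 \<longleftrightarrow> True"
| "valid_pair G2_7 \<longleftrightarrow> True"

text \<open>Simple roots (Bourbaki conventions).  F_4: e_2 - e_3, e_3 - e_4, e_4, (e_1-e_2-e_3-e_4)/2.
  G_2: here h is given the basis of fundamental coweights, so that the simple roots
  alpha_1 (short), alpha_2 (long) are the coordinate functionals.\<close>
fun simple_roots :: "pair \<Rightarrow> (nat \<Rightarrow> real) set" where
  "simple_roots (SO_odd_V n) = {ee i - ee (Suc i) | i. Suc i < n} \<union> {ee (n - 1)}"
| "simple_roots (Sp_V n) = {ee i - ee (Suc i) | i. Suc i < n} \<union> {fscale 2 (ee (n - 1))}"
| "simple_roots (Sp_Wedge2_0 n) = {ee i - ee (Suc i) | i. Suc i < n} \<union> {fscale 2 (ee (n - 1))}"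
| "simple_roots (Sp_V_Wedge2_0 n) = {ee i - ee (Suc i) | i. Suc i < n} \<union> {fscale 2 (ee (n - 1))}"
| "simple_roots F4_26 =
     {ee 1 - ee 2, ee 2 - ee 3, ee 3, fscale (1/2) (ee 0 - ee 1 - ee 2 - ee 3)}"
| "simple_roots G2_7 = {ee 0, ee 1}"

definition weights_V_B :: "nat \<Rightarrow> (nat \<Rightarrow> real) set" where
  "weights_V_B n = {ee i | i. i < n} \<union> {- ee i | i. i < n} \<union> {0}"

definition weights_V_C :: "nat \<Rightarrow> (nat \<Rightarrow> real) set" where
  "weights_V_C n = {ee i | i. i < n} \<union> {- ee i | i. i < n}"

definition weights_W2_0 :: "nat \<Rightarrow> (nat \<Rightarrow> real) set" where
  "weights_W2_0 n =
     {fscale s (ee i) + fscale t (ee j) | (s::real) (t::real) i j. s \<in> {1, -1} \<and> t \<in> {1, -1} \<and> i < j \<and> j < n}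
     \<union> (if n \<ge> 2 then {0} else {})"

text \<open>Weights of the 26-dimensional representation of f_4: the short roots and 0\<close>
definition weights_F4_26 :: "(nat \<Rightarrow> real) set" where
  "weights_F4_26 = {ee i | i. i < 4} \<union> {- ee i | i. i < 4}
     \<union> {(\<lambda>j. if j < 4 then s j / 2 else 0) | s. \<forall>j. s j \<in> {1, -1}} \<union> {0}"

text \<open>Weights of the 7-dimensional representation of g_2: the short roots and 0,
  in simple-root coordinates (alpha_1 short)\<close>
definition weights_G2_7 :: "(nat \<Rightarrow> real) set" where
  "weights_G2_7 = {ee 0, ee 0 + ee 1, fscale 2 (ee 0) + ee 1,
                   - ee 0, - (ee 0 + ee 1), - (fscale 2 (ee 0) + ee 1), 0}"

fun weights :: "pair \<Rightarrow> (nat \<Rightarrow> real) set" where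
  "weights (SO_odd_V n) = weights_V_B n"
| "weights (Sp_V n) = weights_V_C n"
| "weights (Sp_Wedge2_0 n) = weights_W2_0 n"
| "weights (Sp_V_Wedge2_0 n) = weights_V_C n \<union> weights_W2_0 n"
| "weights F4_26 = weights_F4_26"
| "weights G2_7 = weights_G2_7"

definition weyl_chamber :: "pair \<Rightarrow> (nat \<Rightarrow> real) set" where
  "weyl_chamber p = {x \<in> En (rank p). \<forall>a \<in> simple_roots p. ev (rank p) a x \<ge> 0}"

definition hyperplanes :: "pair \<Rightarrow> (nat \<Rightarrow> real) set set" where
  "hyperplanes p = {kernel (rank p) w | w. w \<in> weights p \<and> nonzero_fun (rank p) w}"

definition walls :: "pair \<Rightarrow> (nat \<Rightarrow> real) set set" where
  "walls p = {kernel (rank p) a | a. a \<in> simple_roots p}"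

definition htop :: "nat \<Rightarrow> (nat \<Rightarrow> real) topology" where
  "htop n = subtopology euclidean (En n)"

definition chambers :: "pair \<Rightarrow> (nat \<Rightarrow> real) set set" where
  "chambers p =
     (let T = htop (rank p);
          U = (T interior_of weyl_chamber p) - \<Union>(hyperplanes p)
      in {T closure_of C | C. C \<in> connected_components_of (subtopology T U)})"

definition is_face :: "pair \<Rightarrow> (nat \<Rightarrow> real) set \<Rightarrow> bool" where
  "is_face p F \<longleftrightarrow> F \<in> chambers p \<or>
     (\<exists>C \<in> chambers p. \<exists>f c. nonzero_fun (rank p) f \<and>
        (\<forall>x \<in> C. ev (rank p) f x \<ge> c) \<and> (\<exists>x \<in> C. ev (rank p) f x = c) \<and>
        F = {x \<in> C. ev (rank p) f x = c})"

definition is_flat :: "pair \<Rightarrow> (nat \<Rightarrow> real) set \<Rightarrow> bool" where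
  "is_flat p F \<longleftrightarrow>
     (\<exists>S. S \<subseteq> hyperplanes p \<union> walls p \<and> F = weyl_chamber p \<inter> \<Inter>S)"

definition simp_cone :: "(nat \<Rightarrow> nat \<Rightarrow> real) \<Rightarrow> nat set \<Rightarrow> (nat \<Rightarrow> real) set" where
  "simp_cone v S = {(\<Sum>i\<in>S. fscale (c i) (v i)) | c. \<forall>i\<in>S. c i \<ge> 0}"

end

theory Submission
  imports Defs
begin

text \<open>In each case the simple roots are, up to positive scalars, a basis \<open>a\<^sub>1, \<dots>, a\<^sub>n\<close> of the
  dual of \<open>\<frak>h\<close>, so the Weyl chamber \<open>W\<close> is the simplicial cone over the dual basis
  \<open>v\<^sub>1, \<dots>, v\<^sub>n\<close> of fundamental coweights.  The key observation is that every nonzero weight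
  \<open>w\<close> of \<open>R\<close> is sign coherent: the values \<open>w(v\<^sub>i)\<close> are all \<open>\<ge> 0\<close> or all \<open>\<le> 0\<close>.  Writing
  \<open>x = \<Sum> a\<^sub>i(x) v\<^sub>i\<close>, such a \<open>w\<close> cannot vanish on the interior of \<open>W\<close>, and on \<open>W\<close> it
  vanishes exactly on the face spanned by the \<open>v\<^sub>i\<close> with \<open>w(v\<^sub>i) = 0\<close>.  Hence the interior
  of \<open>W\<close> is the unique chamber, and both faces and flats are the \<open>2\<^sup>n\<close> faces of the simplicial
  cone, the \<open>k\<close>-dimensional ones being indexed by the \<open>k\<close>-subsets of the basis.\<close>

interpretation fs: vector_space fscale
  by unfold_locales (auto simp: fscale_def algebra_simps fun_eq_iff)

lemma fscale_apply [simp]: "fscale c x k = c * x k"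
  by (simp add: fscale_def)

lemma sum_apply: "(\<Sum>i\<in>S. g i) k = (\<Sum>i\<in>S. (g i k :: real))"
  by (induction S rule: infinite_finite_induct) auto

lemma ee_apply: "ee i j = (if j = i then 1 else 0)"
  by (simp add: ee_def)

subsection \<open>Linear functionals on \<open>\<real>\<^sup>n\<close>\<close>

lemma ev_add [simp]: "ev n f (x + y) = ev n f x + ev n f y"
  by (simp add: ev_def algebra_simps sum.distrib)

lemma ev_fscale [simp]: "ev n f (fscale c x) = c * ev n f x"
  by (simp add: ev_def algebra_simps sum_distrib_left)

lemma ev_diff [simp]: "ev n f (x - y) = ev n f x - ev n f y"
  by (simp add: ev_def algebra_simps sum_subtractf)

lemma ev_zero [simp]: "ev n f 0 = 0"
  by (simp add: ev_def)

lemma ev_sum: "ev n f (\<Sum>i\<in>S. g i) = (\<Sum>i\<in>S. ev n f (g i))"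
  by (simp add: ev_def sum_apply sum_distrib_left sum.swap[of _ S])

lemma ev_add_fun: "ev n (f + g) x = ev n f x + ev n g x"
  by (simp add: ev_def algebra_simps sum.distrib)

lemma ev_diff_fun: "ev n (f - g) x = ev n f x - ev n g x"
  by (simp add: ev_def algebra_simps sum_subtractf)

lemma ev_uminus_fun: "ev n (- f) x = - ev n f x"
  by (simp add: ev_def sum_negf)

lemma ev_fscale_fun: "ev n (fscale c f) x = c * ev n f x"
  by (simp add: ev_def algebra_simps sum_distrib_left)

lemma ev_sum_fun: "ev n (\<Sum>i\<in>S. g i) x = (\<Sum>i\<in>S. ev n (g i) x)"
  by (simp add: ev_def sum_apply sum_distrib_right sum.swap[of _ S])

lemma ev_ee_fun: "ev n (ee i) x = (if i < n then x i else 0)"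
  unfolding ev_def ee_def by (simp add: if_distrib[of "\<lambda>c. c * _"] cong: if_cong)

lemma ev_ee: "ev n f (ee i) = (if i < n then f i else 0)"
  unfolding ev_def ee_def by (simp add: if_distrib[of "\<lambda>c. _ * c"] cong: if_cong)

lemma En_add: "x \<in> En n \<Longrightarrow> y \<in> En n \<Longrightarrow> x + y \<in> En n"
  by (simp add: En_def)

lemma En_fscale: "x \<in> En n \<Longrightarrow> fscale c x \<in> En n"
  by (simp add: En_def)

lemma En_sum: "(\<And>i. i \<in> S \<Longrightarrow> g i \<in> En n) \<Longrightarrow> (\<Sum>i\<in>S. g i) \<in> En n"
  by (simp add: En_def sum_apply)

lemma ee_in_En: "i < n \<Longrightarrow> ee i \<in> En n"
  by (simp add: En_def ee_def)

lemma continuous_on_ev: "continuous_on UNIV (ev n f)"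
  unfolding ev_def by (intro continuous_intros continuous_on_product_coordinates)

lemma open_ev_pos: "open {x. 0 < ev n f x}"
  using open_Collect_less[OF continuous_on_const continuous_on_ev] by simp

lemma closed_ev_nonneg: "closed {x. 0 \<le> ev n f x}"
  using closed_Collect_le[OF continuous_on_const continuous_on_ev] by simp

lemma open_line_nbhd:
  fixes G :: "(nat \<Rightarrow> real) set"
  assumes "open G" "x \<in> G"
  shows "\<exists>e>0. \<forall>t. \<bar>t\<bar> < e \<longrightarrow> x + fscale t y \<in> G"
proof -
  have "continuous_on UNIV (\<lambda>t::real. x + fscale t y)"
    by (intro continuous_on_coordinatewise_then_product) (simp add: continuous_intros)
  then have "open ((\<lambda>t::real. x + fscale t y) -` G)"
    using continuous_on_open_vimage[of UNIV] assms(1) by auto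
  moreover have "0 \<in> (\<lambda>t::real. x + fscale t y) -` G"
    using assms(2) by simp
  ultimately obtain e where "e > 0" "ball 0 e \<subseteq> (\<lambda>t::real. x + fscale t y) -` G"
    by (meson openE)
  then show ?thesis
    by (auto simp: subset_iff dist_real_def)
qed

lemma openin_htop: "openin (htop n) U \<longleftrightarrow> (\<exists>G. open G \<and> U = En n \<inter> G)"
  by (simp add: htop_def openin_open)

lemma closedin_htop: "closedin (htop n) U \<longleftrightarrow> (\<exists>G. closed G \<and> U = En n \<inter> G)"
  by (simp add: htop_def closedin_closed)

subsection \<open>Simplicial cones of a pair of dual bases\<close>

definition sign_coherent :: "nat \<Rightarrow> (nat \<Rightarrow> nat \<Rightarrow> real) \<Rightarrow> (nat \<Rightarrow> real) \<Rightarrow> bool" where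
  "sign_coherent n v w \<longleftrightarrow> (\<forall>i<n. 0 \<le> ev n w (v i)) \<or> (\<forall>i<n. ev n w (v i) \<le> 0)"

locale dual_bases =
  fixes n :: nat and a v :: "nat \<Rightarrow> nat \<Rightarrow> real"
  assumes v_in_En: "\<And>i. i < n \<Longrightarrow> v i \<in> En n"
    and ev_dual: "\<And>i j. i < n \<Longrightarrow> j < n \<Longrightarrow> ev n (a i) (v j) = (if i = j then 1 else 0)"
    and coord_expansion: "\<And>x k. x \<in> En n \<Longrightarrow> x k = (\<Sum>i<n. ev n (a i) x * v i k)"
begin

definition closed_cone :: "(nat \<Rightarrow> real) set" where
  "closed_cone = {x \<in> En n. \<forall>i<n. 0 \<le> ev n (a i) x}"

definition open_cone :: "(nat \<Rightarrow> real) set" where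
  "open_cone = {x \<in> En n. \<forall>i<n. 0 < ev n (a i) x}"

definition cone_face :: "nat set \<Rightarrow> (nat \<Rightarrow> real) set" where
  "cone_face S = {x \<in> closed_cone. \<forall>i<n. i \<notin> S \<longrightarrow> ev n (a i) x = 0}"

lemma basis_expansion: "x \<in> En n \<Longrightarrow> x = (\<Sum>i<n. fscale (ev n (a i) x) (v i))"
  by (rule ext) (simp add: sum_apply coord_expansion[symmetric])

lemma ev_basis_expansion: "x \<in> En n \<Longrightarrow> ev n w x = (\<Sum>i<n. ev n (a i) x * ev n w (v i))"
  by (subst basis_expansion) (simp_all add: ev_sum)

lemma ev_dual_sum:
  assumes "j < n" "S \<subseteq> {..<n}"
  shows "ev n (a j) (\<Sum>i\<in>S. fscale (c i) (v i)) = (if j \<in> S then c j else 0)"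
proof -
  have "ev n (a j) (\<Sum>i\<in>S. fscale (c i) (v i)) = (\<Sum>i\<in>S. c i * (if j = i then 1 else 0))"
    using assms by (auto simp: ev_sum ev_dual intro!: sum.cong)
  also have "\<dots> = (if j \<in> S then c j else 0)"
    using finite_subset[OF assms(2)] by (simp add: if_distrib[of "\<lambda>x. _ * x"] sum.delta cong: if_cong)
  finally show ?thesis .
qed

lemma simp_cone_eq_cone_face:
  assumes S: "S \<subseteq> {..<n}"
  shows "simp_cone v S = cone_face S"
proof
  show "simp_cone v S \<subseteq> cone_face S"
  proof
    fix x assume "x \<in> simp_cone v S"
    then obtain c where x: "x = (\<Sum>i\<in>S. fscale (c i) (v i))" and c: "\<forall>i\<in>S. c i \<ge> 0"
      by (auto simp: simp_cone_def)
    have "x \<in> En n"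
      unfolding x using S by (intro En_sum En_fscale v_in_En) auto
    then show "x \<in> cone_face S"
      using c S by (auto simp: cone_face_def closed_cone_def x ev_dual_sum)
  qed
next
  show "cone_face S \<subseteq> simp_cone v S"
  proof
    fix x assume x: "x \<in> cone_face S"
    then have "x = (\<Sum>i<n. fscale (ev n (a i) x) (v i))"
      by (intro basis_expansion) (simp add: cone_face_def closed_cone_def)
    also have "\<dots> = (\<Sum>i\<in>S. fscale (ev n (a i) x) (v i))"
      using x S by (intro sum.mono_neutral_right) (auto simp: cone_face_def)
    finally show "x \<in> simp_cone v S"
      using x S unfolding simp_cone_def cone_face_def closed_cone_def
      by (intro CollectI exI[of _ "\<lambda>i. ev n (a i) x"]) auto
  qed
qed

lemma closed_cone_eq_simp_cone: "closed_cone = simp_cone v {..<n}"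
  by (auto simp: simp_cone_eq_cone_face cone_face_def)

lemma v_in_simp_cone_iff: "S \<subseteq> {..<n} \<Longrightarrow> j < n \<Longrightarrow> v j \<in> simp_cone v S \<longleftrightarrow> j \<in> S"
  using v_in_En ev_dual by (auto simp: simp_cone_eq_cone_face cone_face_def closed_cone_def)

lemma v_in_closed_cone: "i < n \<Longrightarrow> v i \<in> closed_cone"
  by (simp add: closed_cone_eq_simp_cone v_in_simp_cone_iff)

lemma zero_in_closed_cone: "0 \<in> closed_cone"
  by (simp add: closed_cone_def En_def)

lemma inj_on_simp_cone: "inj_on (simp_cone v) (Pow {..<n})"
proof (rule inj_onI)
  fix S T assume "S \<in> Pow {..<n}" "T \<in> Pow {..<n}" "simp_cone v S = simp_cone v T"
  then show "S = T"
    using v_in_simp_cone_iff[of S] v_in_simp_cone_iff[of T] by blast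
qed

lemma inj_on_v: "inj_on v {..<n}"
proof (rule inj_onI)
  fix i j assume "i \<in> {..<n}" "j \<in> {..<n}" "v i = v j"
  then show "i = j"
    using ev_dual[of i i] ev_dual[of i j] by (auto split: if_splits)
qed

lemma independent_v: "\<not> fs.dependent (v ` {..<n})"
proof
  assume "fs.dependent (v ` {..<n})"
  then obtain t u where t: "finite t" "t \<subseteq> v ` {..<n}" "(\<Sum>w\<in>t. fscale (u w) w) = 0"
    and "\<exists>w\<in>t. u w \<noteq> 0"
    unfolding fs.dependent_explicit by blast
  then obtain j where j: "j < n" "v j \<in> t" "u (v j) \<noteq> 0"
    by auto
  have "0 = ev n (a j) (\<Sum>w\<in>t. fscale (u w) w)"
    by (simp add: t(3))
  also have "\<dots> = (\<Sum>w\<in>t. if w = v j then u w else 0)"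
    unfolding ev_sum
  proof (rule sum.cong)
    fix w assume "w \<in> t"
    then obtain i where "i < n" "w = v i"
      using t(2) by auto
    then show "ev n (a j) (fscale (u w) w) = (if w = v j then u w else 0)"
      using j ev_dual[of j i] inj_on_v by (auto simp: inj_on_def)
  qed simp
  also have "\<dots> = u (v j)"
    using t(1) j(2) by simp
  finally show False
    using j(3) by simp
qed

lemma span_simp_cone: "S \<subseteq> {..<n} \<Longrightarrow> fs.span (simp_cone v S) = fs.span (v ` S)"
proof (subst fs.span_eq, intro conjI subsetI)
  fix x assume "x \<in> simp_cone v S"
  then obtain c where "x = (\<Sum>i\<in>S. fscale (c i) (v i))"
    by (auto simp: simp_cone_def)
  then show "x \<in> fs.span (v ` S)"
    by (simp add: fs.span_sum fs.span_scale fs.span_base)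
next
  fix y assume "S \<subseteq> {..<n}" "y \<in> v ` S"
  then show "y \<in> fs.span (simp_cone v S)"
    using v_in_simp_cone_iff by (auto intro: fs.span_base)
qed

lemma span_dim_simp_cone: "S \<subseteq> {..<n} \<Longrightarrow> span_dim (simp_cone v S) = card S"
proof -
  assume S: "S \<subseteq> {..<n}"
  have "fs.independent (v ` S)"
    using independent_v fs.independent_mono S by blast
  have "span_dim (simp_cone v S) = fs.dim (v ` S)"
    by (simp add: span_dim_def span_simp_cone[OF S] fs.dim_span)
  also have "\<dots> = card (v ` S)"
    using \<open>fs.independent (v ` S)\<close> by (rule fs.dim_eq_card_independent)
  also have "\<dots> = card S"
    using S by (intro card_image inj_on_subset[OF inj_on_v])
  finally show ?thesis .
qed

lemma card_simp_cones_of_dim: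
  "card {F. F \<in> {simp_cone v S | S. S \<subseteq> {..<n}} \<and> span_dim F = k} = n choose k"
proof -
  have "{F. F \<in> {simp_cone v S | S. S \<subseteq> {..<n}} \<and> span_dim F = k} =
        simp_cone v ` {S. S \<subseteq> {..<n} \<and> card S = k}"
    by (auto simp: span_dim_simp_cone)
  moreover have "inj_on (simp_cone v) {S. S \<subseteq> {..<n} \<and> card S = k}"
    by (rule inj_on_subset[OF inj_on_simp_cone]) auto
  ultimately show ?thesis
    using n_subsets[of "{..<n}" k] by (simp add: card_image)
qed

lemma sign_coherent_ev_eq_0_iff:
  assumes w: "sign_coherent n v w" and x: "x \<in> closed_cone"
  shows "ev n w x = 0 \<longleftrightarrow> (\<forall>i<n. ev n w (v i) \<noteq> 0 \<longrightarrow> ev n (a i) x = 0)"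
proof -
  have x_nonneg: "\<forall>i<n. 0 \<le> ev n (a i) x"
    using x by (simp add: closed_cone_def)
  have ev_x: "ev n w x = (\<Sum>i<n. ev n (a i) x * ev n w (v i))"
    using x by (intro ev_basis_expansion) (simp add: closed_cone_def)
  from w show ?thesis
    unfolding sign_coherent_def
  proof
    assume "\<forall>i<n. 0 \<le> ev n w (v i)"
    then have "(\<Sum>i<n. ev n (a i) x * ev n w (v i)) = 0 \<longleftrightarrow>
               (\<forall>i\<in>{..<n}. ev n (a i) x * ev n w (v i) = 0)"
      using x_nonneg by (intro sum_nonneg_eq_0_iff) auto
    then show ?thesis
      using ev_x by auto
  next
    assume "\<forall>i<n. ev n w (v i) \<le> 0"
    then have "(\<Sum>i<n. - (ev n (a i) x * ev n w (v i))) = 0 \<longleftrightarrow>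
               (\<forall>i\<in>{..<n}. - (ev n (a i) x * ev n w (v i)) = 0)"
      using x_nonneg by (intro sum_nonneg_eq_0_iff) (auto simp: mult_nonneg_nonpos)
    then show ?thesis
      using ev_x by (auto simp: sum_negf)
  qed
qed

lemma sign_coherent_ev_open_cone_nonzero:
  assumes "sign_coherent n v w" "i < n" "ev n w (v i) \<noteq> 0" "x \<in> open_cone"
  shows "ev n w x \<noteq> 0"
proof -
  have "x \<in> closed_cone"
    using assms(4) by (auto simp: open_cone_def closed_cone_def less_imp_le)
  moreover have "ev n (a i) x \<noteq> 0"
    using assms(2,4) by (auto simp: open_cone_def)
  ultimately show ?thesis
    using sign_coherent_ev_eq_0_iff[OF assms(1)] assms(2,3) by blast
qed

lemma nonzero_fun_ev_v: "nonzero_fun n w \<Longrightarrow> \<exists>i<n. ev n w (v i) \<noteq> 0"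
proof (rule ccontr)
  assume "nonzero_fun n w" "\<not> (\<exists>i<n. ev n w (v i) \<noteq> 0)"
  moreover obtain j where "j < n" "w j \<noteq> 0"
    using \<open>nonzero_fun n w\<close> by (auto simp: nonzero_fun_def)
  moreover have "ev n w (ee j) = (\<Sum>i<n. ev n (a i) (ee j) * ev n w (v i))"
    using \<open>j < n\<close> by (intro ev_basis_expansion ee_in_En)
  ultimately show False
    by (simp add: ev_ee)
qed

lemma ev_dual_sign_coherent: "i < n \<Longrightarrow> sign_coherent n v (a i)"
  by (simp add: sign_coherent_def ev_dual)

lemma openin_open_cone: "openin (htop n) open_cone"
proof -
  have "open_cone = En n \<inter> (\<Inter>i\<in>{..<n}. {x. 0 < ev n (a i) x})"
    by (auto simp: open_cone_def)
  moreover have "open (\<Inter>i\<in>{..<n}. {x. 0 < ev n (a i) x})"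
    by (intro open_INT) (auto intro: open_ev_pos)
  ultimately show ?thesis
    unfolding openin_htop by blast
qed

lemma closedin_closed_cone: "closedin (htop n) closed_cone"
proof -
  have "closed_cone = En n \<inter> (\<Inter>i\<in>{..<n}. {x. 0 \<le> ev n (a i) x})"
    by (auto simp: closed_cone_def)
  moreover have "closed (\<Inter>i\<in>{..<n}. {x. 0 \<le> ev n (a i) x})"
    by (intro closed_INT) (auto intro: closed_ev_nonneg)
  ultimately show ?thesis
    unfolding closedin_htop by blast
qed

lemma interior_of_closed_cone: "htop n interior_of closed_cone = open_cone"
proof
  show "open_cone \<subseteq> htop n interior_of closed_cone"
    by (intro interior_of_maximal openin_open_cone)
       (auto simp: open_cone_def closed_cone_def less_imp_le)
next
  show "htop n interior_of closed_cone \<subseteq> open_cone"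
  proof
    fix x assume x: "x \<in> htop n interior_of closed_cone"
    have x_cone: "x \<in> closed_cone"
      using interior_of_subset x by (rule subsetD)
    obtain G where G: "open G" "htop n interior_of closed_cone = En n \<inter> G"
      using openin_interior_of[of "htop n" closed_cone] unfolding openin_htop by (elim exE conjE)
    have "x \<in> G"
      using x unfolding G(2) by simp
    have "0 < ev n (a i) x" if i: "i < n" for i
    proof (rule ccontr)
      assume "\<not> 0 < ev n (a i) x"
      moreover have "0 \<le> ev n (a i) x"
        using x_cone i by (simp add: closed_cone_def)
      ultimately have x_wall: "ev n (a i) x = 0"
        by simp
      obtain e where e: "e > 0" "\<forall>t. \<bar>t\<bar> < e \<longrightarrow> x + fscale t (v i) \<in> G"
        using open_line_nbhd[OF G(1) \<open>x \<in> G\<close>] by blast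
      let ?y = "x + fscale (- e / 2) (v i)"
      have "?y \<in> En n"
        using x_cone i by (intro En_add En_fscale v_in_En) (auto simp: closed_cone_def)
      moreover have "?y \<in> G"
        using e(1) e(2)[rule_format, of "- e / 2"] by simp
      ultimately have "?y \<in> htop n interior_of closed_cone"
        unfolding G(2) by simp
      then have "?y \<in> closed_cone"
        using interior_of_subset by (rule subsetD[rotated])
      moreover have "ev n (a i) ?y = - e / 2"
        using x_wall i ev_dual by simp
      ultimately show False
        using i e(1) by (auto simp: closed_cone_def)
    qed
    then show "x \<in> open_cone"
      using x_cone by (simp add: open_cone_def closed_cone_def)
  qed
qed

definition barycenter :: "nat \<Rightarrow> real" where
  "barycenter = (\<Sum>i<n. v i)"

lemma barycenter_in_En: "barycenter \<in> En n"
  unfolding barycenter_def by (intro En_sum v_in_En) auto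

lemma ev_barycenter: "j < n \<Longrightarrow> ev n (a j) barycenter = 1"
  using ev_dual_sum[of j "{..<n}" "\<lambda>_. 1"] by (simp add: barycenter_def)

lemma barycenter_in_open_cone: "barycenter \<in> open_cone"
  by (simp add: open_cone_def barycenter_in_En ev_barycenter)

lemma closure_of_open_cone: "htop n closure_of open_cone = closed_cone"
proof
  show "htop n closure_of open_cone \<subseteq> closed_cone"
    by (intro closure_of_minimal closedin_closed_cone)
       (auto simp: open_cone_def closed_cone_def less_imp_le)
next
  show "closed_cone \<subseteq> htop n closure_of open_cone"
  proof
    fix x assume x: "x \<in> closed_cone"
    show "x \<in> htop n closure_of open_cone"
      unfolding in_closure_of
    proof (intro conjI allI impI)
      show "x \<in> topspace (htop n)"
        using x by (simp add: htop_def closed_cone_def)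
      fix V assume V: "x \<in> V \<and> openin (htop n) V"
      then obtain G where G: "open G" "V = En n \<inter> G"
        by (auto simp: openin_htop)
      have "x \<in> G"
        using V G(2) by blast
      obtain e where e: "e > 0" "\<forall>t. \<bar>t\<bar> < e \<longrightarrow> x + fscale t barycenter \<in> G"
        using open_line_nbhd[OF G(1) \<open>x \<in> G\<close>] by blast
      let ?y = "x + fscale (e / 2) barycenter"
      have "?y \<in> En n"
        using x by (intro En_add En_fscale barycenter_in_En) (simp add: closed_cone_def)
      moreover have "0 < ev n (a i) ?y" if "i < n" for i
        using x e(1) that by (simp add: closed_cone_def ev_barycenter add_nonneg_pos)
      ultimately have "?y \<in> open_cone"
        by (simp add: open_cone_def)
      moreover have "?y \<in> V"
        using e \<open>?y \<in> En n\<close> G(2) by simp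
      ultimately show "\<exists>y. y \<in> open_cone \<and> y \<in> V"
        by blast
    qed
  qed
qed

lemma path_connected_open_cone: "path_connected open_cone"
  unfolding path_connected_def
proof (intro ballI)
  fix x y assume x: "x \<in> open_cone" and y: "y \<in> open_cone"
  let ?g = "\<lambda>t::real. x + fscale t (y - x)"
  have "path ?g"
    unfolding path_def
    by (intro continuous_on_coordinatewise_then_product) (simp add: continuous_intros)
  moreover have "path_image ?g \<subseteq> open_cone"
  proof
    fix z assume "z \<in> path_image ?g"
    then obtain t where t: "0 \<le> t" "t \<le> 1" "z = ?g t"
      by (auto simp: path_image_def)
    have "0 < ev n (a i) z" if i: "i < n" for i
    proof -
      have "0 < ev n (a i) x" "0 < ev n (a i) y"
        using x y i by (auto simp: open_cone_def)
      moreover have "ev n (a i) z = (1 - t) * ev n (a i) x + t * ev n (a i) y"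
        by (simp add: t(3) algebra_simps)
      ultimately show ?thesis
      proof (cases "t = 0")
        case False
        then show ?thesis
          using t(1,2) \<open>ev n (a i) z = _\<close> \<open>0 < ev n (a i) x\<close> \<open>0 < ev n (a i) y\<close>
          by (simp add: add_nonneg_pos)
      qed simp
    qed
    moreover have "z \<in> En n"
      unfolding t(3) using x y by (intro En_add En_fscale) (auto simp: open_cone_def En_def)
    ultimately show "z \<in> open_cone"
      by (simp add: open_cone_def)
  qed
  moreover have "pathstart ?g = x" "pathfinish ?g = y"
    by (simp_all add: pathstart_def pathfinish_def fun_eq_iff)
  ultimately show "\<exists>g. path g \<and> path_image g \<subseteq> open_cone \<and> pathstart g = x \<and> pathfinish g = y"
    by blast
qed

end

subsection \<open>Arrangements whose Weyl chamber is a simplicial cone\<close>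

definition pos_multiple :: "nat \<Rightarrow> (nat \<Rightarrow> real) \<Rightarrow> (nat \<Rightarrow> real) \<Rightarrow> bool" where
  "pos_multiple n s f \<longleftrightarrow> (\<exists>c>0. \<forall>k<n. s k = c * f k)"

lemma pos_multiple_ev:
  assumes "pos_multiple n s f"
  shows "\<exists>c>0. \<forall>x. ev n s x = c * ev n f x"
proof -
  obtain c where c: "c > 0" "\<forall>k<n. s k = c * f k"
    using assms unfolding pos_multiple_def by blast
  have "ev n s x = c * ev n f x" for x
    unfolding ev_def sum_distrib_left using c(2) by (intro sum.cong) (simp_all add: mult.assoc)
  with c(1) show ?thesis
    by blast
qed

lemma pos_multiple_kernel:
  assumes "pos_multiple n s f"
  shows "kernel n s = kernel n f"
proof -
  obtain c where "c > 0" "\<forall>x. ev n s x = c * ev n f x"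
    using pos_multiple_ev[OF assms] by blast
  then show ?thesis
    by (simp add: kernel_def)
qed

lemma pos_multiple_refl: "pos_multiple n f f"
  unfolding pos_multiple_def by (rule exI[of _ 1]) simp

locale simplicial_arrangement = dual_bases n a v
  for n :: nat and a v :: "nat \<Rightarrow> nat \<Rightarrow> real" +
  fixes p :: pair
  assumes rank_eq: "rank p = n"
    and simple_root_multiple: "\<And>s. s \<in> simple_roots p \<Longrightarrow> \<exists>i<n. pos_multiple n s (a i)"
    and multiple_simple_root: "\<And>i. i < n \<Longrightarrow> \<exists>s\<in>simple_roots p. pos_multiple n s (a i)"
    and weights_sign_coherent: "\<And>w. w \<in> weights p \<Longrightarrow> nonzero_fun n w \<Longrightarrow> sign_coherent n v w"
begin

lemma simple_roots_nonneg_iff: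
  "(\<forall>s\<in>simple_roots p. 0 \<le> ev n s x) \<longleftrightarrow> (\<forall>i<n. 0 \<le> ev n (a i) x)"
proof (intro iffI allI ballI impI)
  fix i assume "\<forall>s\<in>simple_roots p. 0 \<le> ev n s x" "i < n"
  moreover obtain s c where "s \<in> simple_roots p" "c > 0" "\<forall>y. ev n s y = c * ev n (a i) y"
    using multiple_simple_root[OF \<open>i < n\<close>] pos_multiple_ev by blast
  ultimately show "0 \<le> ev n (a i) x"
    by (metis zero_le_mult_iff not_less)
next
  fix s assume "\<forall>i<n. 0 \<le> ev n (a i) x" "s \<in> simple_roots p"
  moreover obtain i c where "i < n" "c > 0" "\<forall>y. ev n s y = c * ev n (a i) y"
    using simple_root_multiple[OF \<open>s \<in> simple_roots p\<close>] pos_multiple_ev by blast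
  ultimately show "0 \<le> ev n s x"
    by simp
qed

lemma weyl_chamber_eq: "weyl_chamber p = closed_cone"
  by (simp add: weyl_chamber_def closed_cone_def rank_eq simple_roots_nonneg_iff)

lemma sign_coherent_wall:
  assumes "H \<in> walls p"
  shows "\<exists>w. H = kernel n w \<and> sign_coherent n v w"
proof -
  obtain s where s: "s \<in> simple_roots p" "H = kernel n s"
    using assms by (auto simp: walls_def rank_eq)
  then obtain i where "i < n" "pos_multiple n s (a i)"
    using simple_root_multiple by blast
  then show ?thesis
    using s(2) pos_multiple_kernel ev_dual_sign_coherent by blast
qed

lemma kernel_dual_in_walls:
  assumes "i < n"
  shows "kernel n (a i) \<in> walls p"
proof -
  obtain s where "s \<in> simple_roots p" "pos_multiple n s (a i)"
    using multiple_simple_root[OF assms] by blast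
  then show ?thesis
    unfolding walls_def rank_eq using pos_multiple_kernel by blast
qed

lemma sign_coherent_hyperplane:
  assumes "H \<in> hyperplanes p"
  shows "\<exists>w. H = kernel n w \<and> sign_coherent n v w \<and> (\<exists>i<n. ev n w (v i) \<noteq> 0)"
proof -
  obtain w where "w \<in> weights p" "nonzero_fun n w" "H = kernel n w"
    using assms by (auto simp: hyperplanes_def rank_eq)
  then show ?thesis
    using weights_sign_coherent nonzero_fun_ev_v by blast
qed

lemma hyperplanes_disjoint_open_cone: "\<Union>(hyperplanes p) \<inter> open_cone = {}"
proof -
  have False if "H \<in> hyperplanes p" "x \<in> H" "x \<in> open_cone" for H x
    using sign_coherent_hyperplane[OF that(1)] sign_coherent_ev_open_cone_nonzero that(2,3)
    by (auto simp: kernel_def)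
  then show ?thesis
    by blast
qed

lemma chambers_eq: "chambers p = {closed_cone}"
proof -
  have U: "(htop n interior_of weyl_chamber p) - \<Union>(hyperplanes p) = open_cone"
    using hyperplanes_disjoint_open_cone by (auto simp: weyl_chamber_eq interior_of_closed_cone)
  have "subtopology (htop n) open_cone = top_of_set open_cone"
    unfolding htop_def subtopology_subtopology by (auto simp: open_cone_def Int_absorb1)
  moreover have "connected_components_of (top_of_set open_cone) = {open_cone}"
    using path_connected_open_cone barycenter_in_open_cone
    by (subst connected_components_of_eq_singleton)
       (auto intro: path_connected_imp_connected_space simp: null_topspace_iff_trivial[symmetric])
  ultimately show ?thesis
    unfolding chambers_def Let_def rank_eq U by (simp add: closure_of_open_cone)
qed

lemma supporting_hyperplane_face:
  assumes supp: "\<forall>x\<in>closed_cone. c \<le> ev n f x" and x0: "x0 \<in> closed_cone" "ev n f x0 = c"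
  shows "\<exists>S\<subseteq>{..<n}. {x \<in> closed_cone. ev n f x = c} = simp_cone v S"
proof -
  \<comment> \<open>\<open>c = 0\<close> because the closed cone contains \<open>0\<close> and \<open>2 x\<^sub>0\<close>.\<close>
  have "fscale 2 x0 \<in> closed_cone"
    using x0(1) by (auto simp: closed_cone_def En_fscale)
  then have "c \<le> ev n f (fscale 2 x0)"
    using supp by blast
  moreover have "c \<le> ev n f 0"
    using supp zero_in_closed_cone by blast
  ultimately have c0: "c = 0"
    using x0(2) by simp
  then have "sign_coherent n v f"
    using supp v_in_closed_cone by (auto simp: sign_coherent_def)
  then have "{x \<in> closed_cone. ev n f x = c} = cone_face {i. i < n \<and> ev n f (v i) = 0}"
    using sign_coherent_ev_eq_0_iff c0 by (auto simp: cone_face_def)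
  then show ?thesis
    by (metis (no_types, lifting) mem_Collect_eq subsetI lessThan_iff simp_cone_eq_cone_face)
qed

lemma cone_face_supported:
  assumes S: "S \<subseteq> {..<n}" "S \<noteq> {..<n}"
  shows "\<exists>f. nonzero_fun n f \<and> (\<forall>x\<in>closed_cone. 0 \<le> ev n f x) \<and>
             simp_cone v S = {x \<in> closed_cone. ev n f x = 0}"
proof -
  obtain j where j: "j < n" "j \<notin> S"
    using S by auto
  define f where "f = (\<Sum>i\<in>{..<n} - S. a i)"
  have ev_f: "ev n f x = (\<Sum>i\<in>{..<n} - S. ev n (a i) x)" for x
    by (simp add: f_def ev_sum_fun)
  have "ev n f (v j) = (\<Sum>i\<in>{..<n} - S. if i = j then 1 else 0)"
    unfolding ev_f using j by (intro sum.cong) (auto simp: ev_dual)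
  then have "ev n f (v j) = 1"
    using j by simp
  then have "nonzero_fun n f"
    by (rule contrapos_pp) (simp add: nonzero_fun_def ev_def)
  moreover have "\<forall>x\<in>closed_cone. 0 \<le> ev n f x"
    unfolding ev_f by (auto simp: closed_cone_def intro!: sum_nonneg)
  moreover have "ev n f x = 0 \<longleftrightarrow> (\<forall>i<n. i \<notin> S \<longrightarrow> ev n (a i) x = 0)" if "x \<in> closed_cone" for x
    unfolding ev_f using that by (subst sum_nonneg_eq_0_iff) (auto simp: closed_cone_def)
  ultimately show ?thesis
    using S(1) by (intro exI[of _ f]) (auto simp: simp_cone_eq_cone_face cone_face_def)
qed

lemma faces_eq: "{F. is_face p F} = {simp_cone v S | S. S \<subseteq> {..<n}}"
proof -
  have "is_face p F \<longleftrightarrow> (\<exists>S\<subseteq>{..<n}. F = simp_cone v S)" for F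
  proof
    assume "is_face p F"
    then consider "F = closed_cone"
      | f c where "\<forall>x\<in>closed_cone. c \<le> ev n f x" "\<exists>x\<in>closed_cone. ev n f x = c"
                  "F = {x \<in> closed_cone. ev n f x = c}"
      unfolding is_face_def chambers_eq rank_eq by blast
    then show "\<exists>S\<subseteq>{..<n}. F = simp_cone v S"
    proof cases
      case 1
      then show ?thesis
        using closed_cone_eq_simp_cone by blast
    next
      case 2
      then show ?thesis
        using supporting_hyperplane_face by blast
    qed
  next
    assume "\<exists>S\<subseteq>{..<n}. F = simp_cone v S"
    then obtain S where S: "S \<subseteq> {..<n}" "F = simp_cone v S"
      by blast
    show "is_face p F"
    proof (cases "S = {..<n}")
      case True
      then show ?thesis
        using S(2) by (simp add: is_face_def chambers_eq closed_cone_eq_simp_cone)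
    next
      case False
      then obtain f where "nonzero_fun n f" "\<forall>x\<in>closed_cone. 0 \<le> ev n f x"
        "F = {x \<in> closed_cone. ev n f x = 0}"
        using cone_face_supported S by blast
      then show ?thesis
        unfolding is_face_def chambers_eq rank_eq using zero_in_closed_cone
        by (intro disjI2 bexI[of _ closed_cone] exI[of _ f] exI[of _ 0]) auto
    qed
  qed
  then show ?thesis
    by blast
qed

lemma flat_is_simp_cone:
  assumes "is_flat p F"
  shows "\<exists>S\<subseteq>{..<n}. F = simp_cone v S"
proof -
  obtain Fam where Fam: "Fam \<subseteq> hyperplanes p \<union> walls p" and F: "F = closed_cone \<inter> \<Inter>Fam"
    using assms by (auto simp: is_flat_def weyl_chamber_eq)
  have "\<forall>H\<in>Fam. \<exists>w. H = kernel n w \<and> sign_coherent n v w"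
    using Fam sign_coherent_hyperplane sign_coherent_wall by blast
  then obtain g where g: "\<And>H. H \<in> Fam \<Longrightarrow> H = kernel n (g H) \<and> sign_coherent n v (g H)"
    by metis
  define J where "J = {i. i < n \<and> (\<forall>H\<in>Fam. ev n (g H) (v i) = 0)}"
  have "x \<in> \<Inter>Fam \<longleftrightarrow> (\<forall>i<n. i \<notin> J \<longrightarrow> ev n (a i) x = 0)" if x: "x \<in> closed_cone" for x
  proof -
    have "x \<in> \<Inter>Fam \<longleftrightarrow> (\<forall>H\<in>Fam. ev n (g H) x = 0)"
      using g x by (auto simp: kernel_def closed_cone_def)
    also have "\<dots> \<longleftrightarrow> (\<forall>H\<in>Fam. \<forall>i<n. ev n (g H) (v i) \<noteq> 0 \<longrightarrow> ev n (a i) x = 0)"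
      using g sign_coherent_ev_eq_0_iff[OF _ x] by auto
    finally show ?thesis
      by (auto simp: J_def)
  qed
  then have "F = cone_face J"
    by (auto simp: F cone_face_def)
  moreover have "J \<subseteq> {..<n}"
    by (auto simp: J_def)
  ultimately show ?thesis
    using simp_cone_eq_cone_face by blast
qed

lemma simp_cone_is_flat:
  assumes "S \<subseteq> {..<n}"
  shows "is_flat p (simp_cone v S)"
proof -
  define Fam where "Fam = {kernel n (a i) | i. i < n \<and> i \<notin> S}"
  have "Fam \<subseteq> hyperplanes p \<union> walls p"
    using kernel_dual_in_walls by (auto simp: Fam_def)
  moreover have "simp_cone v S = weyl_chamber p \<inter> \<Inter>Fam"
    using assms by (auto simp: simp_cone_eq_cone_face cone_face_def weyl_chamber_eq Fam_def
                               kernel_def closed_cone_def)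
  ultimately show ?thesis
    by (auto simp: is_flat_def)
qed

lemma flats_eq: "{F. is_flat p F} = {simp_cone v S | S. S \<subseteq> {..<n}}"
  using flat_is_simp_cone simp_cone_is_flat by blast

theorem cone_over_simplex:
  "(\<exists>v :: nat \<Rightarrow> nat \<Rightarrow> real.
      (\<forall>i<n. v i \<in> En n) \<and> inj_on v {..<n} \<and>
      \<not> module.dependent fscale (v ` {..<n}) \<and>
      chambers p = {simp_cone v {..<n}} \<and>
      {F. is_face p F} = {simp_cone v S | S. S \<subseteq> {..<n}})
   \<and> card (chambers p) = 1
   \<and> (\<forall>k. card {F. is_face p F \<and> span_dim F = k} = n choose k)
   \<and> (\<forall>k. card {F. is_flat p F \<and> span_dim F = k} = n choose k)"
proof (intro conjI allI)
  show "\<exists>v. (\<forall>i<n. v i \<in> En n) \<and> inj_on v {..<n} \<and> \<not> fs.dependent (v ` {..<n}) \<and>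
            chambers p = {simp_cone v {..<n}} \<and>
            {F. is_face p F} = {simp_cone v S | S. S \<subseteq> {..<n}}"
    using v_in_En inj_on_v independent_v chambers_eq closed_cone_eq_simp_cone faces_eq by blast
  show "card (chambers p) = 1"
    by (simp add: chambers_eq)
  show "card {F. is_face p F \<and> span_dim F = k} = n choose k" for k
    using card_simp_cones_of_dim[of k] faces_eq by (simp add: set_eq_iff)
  show "card {F. is_flat p F \<and> span_dim F = k} = n choose k" for k
    using card_simp_cones_of_dim[of k] flats_eq by (simp add: set_eq_iff)
qed

end

lemma simplicial_arrangementI:
  assumes "dual_bases n a v" "rank p = n" "simple_roots p = a ` {..<n}"
    and "\<And>w. w \<in> weights p \<Longrightarrow> nonzero_fun n w \<Longrightarrow> sign_coherent n v w"
  shows "simplicial_arrangement n a v p"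
proof (intro simplicial_arrangement.intro simplicial_arrangement_axioms.intro assms(1,2,4))
  show "\<exists>i<n. pos_multiple n s (a i)" if "s \<in> simple_roots p" for s
    using that pos_multiple_refl unfolding assms(3) by blast
  show "\<exists>s\<in>simple_roots p. pos_multiple n s (a i)" if "i < n" for i
    using that pos_multiple_refl unfolding assms(3) by blast
qed

lemma dual_bases_ee: "dual_bases n ee ee"
proof
  fix x k assume "x \<in> En n"
  have "(\<Sum>i<n. ev n (ee i) x * ee i k) = (\<Sum>i<n. if i = k then x i else 0)"
    by (intro sum.cong) (auto simp: ev_ee_fun ee_apply)
  also have "\<dots> = x k"
    using \<open>x \<in> En n\<close> by (simp add: sum.delta' En_def)
  finally show "x k = (\<Sum>i<n. ev n (ee i) x * ee i k)"
    by simp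
qed (auto simp: ee_in_En ev_ee_fun ee_apply)

subsection \<open>Types \<open>B\<^sub>n\<close> and \<open>C\<^sub>n\<close>\<close>

definition simple_root_BC :: "nat \<Rightarrow> nat \<Rightarrow> real" where
  "simple_root_BC i = ee i - ee (Suc i)"

definition fund_coweight_BC :: "nat \<Rightarrow> nat \<Rightarrow> real" where
  "fund_coweight_BC i = (\<lambda>j. if j \<le> i then 1 else 0)"

lemma ev_ee_coweight_BC: "ev n (ee k) (fund_coweight_BC i) = (if k < n \<and> k \<le> i then 1 else 0)"
  by (simp add: ev_ee_fun fund_coweight_BC_def)

lemma sum_telescope_from:
  "k \<le> m \<Longrightarrow> (\<Sum>i<m. (x i - x (Suc i)) * (if k \<le> i then 1 else 0)) = x k - (x m :: real)"
  by (induction m) (auto simp: le_Suc_eq)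

lemma dual_bases_BC: "dual_bases n simple_root_BC fund_coweight_BC"
proof
  show "\<And>i. i < n \<Longrightarrow> fund_coweight_BC i \<in> En n"
    by (auto simp: En_def fund_coweight_BC_def)
  show "\<And>i j. i < n \<Longrightarrow> j < n \<Longrightarrow> ev n (simple_root_BC i) (fund_coweight_BC j) = (if i = j then 1 else 0)"
    by (auto simp: simple_root_BC_def ev_diff_fun ev_ee_coweight_BC)
  fix x k assume x: "x \<in> En n"
  have "ev n (simple_root_BC i) x = x i - x (Suc i)" for i
    using x by (auto simp: simple_root_BC_def ev_diff_fun ev_ee_fun En_def)
  then have "(\<Sum>i<n. ev n (simple_root_BC i) x * fund_coweight_BC i k) =
             (\<Sum>i<n. (x i - x (Suc i)) * (if k \<le> i then 1 else 0))"
    by (simp add: fund_coweight_BC_def)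
  also have "\<dots> = x k"
    using x sum_telescope_from[of k n x] by (cases "k < n") (simp_all add: En_def)
  finally show "x k = (\<Sum>i<n. ev n (simple_root_BC i) x * fund_coweight_BC i k)"
    by simp
qed

lemma simplicial_arrangement_BC:
  assumes "rank p = n" "n \<ge> 1" "c > 0"
    and simple_roots_eq:
      "simple_roots p = {ee i - ee (Suc i) | i. Suc i < n} \<union> {fscale c (ee (n - 1))}"
    and "\<And>w. w \<in> weights p \<Longrightarrow> nonzero_fun n w \<Longrightarrow> sign_coherent n fund_coweight_BC w"
  shows "simplicial_arrangement n simple_root_BC fund_coweight_BC p"
proof (intro simplicial_arrangement.intro simplicial_arrangement_axioms.intro dual_bases_BC assms(1,5))
  have last: "pos_multiple n (fscale c (ee (n - 1))) (simple_root_BC (n - 1))"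
    using assms(2,3) by (auto simp: pos_multiple_def simple_root_BC_def ee_def)
  have roots: "simple_roots p = simple_root_BC ` {i. Suc i < n} \<union> {fscale c (ee (n - 1))}"
    unfolding simple_roots_eq simple_root_BC_def by auto
  show "\<exists>i<n. pos_multiple n s (simple_root_BC i)" if s: "s \<in> simple_roots p" for s
  proof -
    consider i where "Suc i < n" "s = simple_root_BC i" | "s = fscale c (ee (n - 1))"
      using s unfolding roots by blast
    then show ?thesis
    proof cases
      case 1
      then show ?thesis
        using pos_multiple_refl by (intro exI[of _ i]) simp
    next
      case 2
      then show ?thesis
        using last assms(2) by (intro exI[of _ "n - 1"]) simp
    qed
  qed
  show "\<exists>s\<in>simple_roots p. pos_multiple n s (simple_root_BC i)" if "i < n" for i
  proof (cases "Suc i < n")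
    case True
    then show ?thesis
      unfolding roots using pos_multiple_refl by blast
  next
    case False
    then have "i = n - 1"
      using that by simp
    then show ?thesis
      unfolding roots using last by blast
  qed
qed

lemma sign_coherent_ee: "sign_coherent n fund_coweight_BC (ee k)"
  by (auto simp: sign_coherent_def ev_ee_coweight_BC)

lemma sign_coherent_neg_ee: "sign_coherent n fund_coweight_BC (- ee k)"
  by (auto simp: sign_coherent_def ev_ee_coweight_BC ev_uminus_fun)

lemma sign_coherent_weights_V_B:
  "w \<in> weights_V_B n \<Longrightarrow> nonzero_fun n w \<Longrightarrow> sign_coherent n fund_coweight_BC w"
  by (auto simp: weights_V_B_def sign_coherent_ee sign_coherent_neg_ee nonzero_fun_def)

lemma sign_coherent_weights_V_C: "w \<in> weights_V_C n \<Longrightarrow> sign_coherent n fund_coweight_BC w"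
  by (auto simp: weights_V_C_def sign_coherent_ee sign_coherent_neg_ee)

lemma sign_coherent_weights_W2_0:
  assumes w: "w \<in> weights_W2_0 n" and "nonzero_fun n w"
  shows "sign_coherent n fund_coweight_BC w"
proof -
  obtain s t i j where st: "s \<in> {1, -1}" "t \<in> {1, -1}" "i < j" "j < n"
    and w_eq: "w = fscale s (ee i) + fscale t (ee j)"
    using w \<open>nonzero_fun n w\<close> by (auto simp: weights_W2_0_def nonzero_fun_def split: if_splits)
  \<comment> \<open>Since \<open>i < j\<close>, the partial sums \<open>0, s, s + t\<close> of the coefficients have the sign of \<open>s\<close> or vanish.\<close>
  have "ev n w (fund_coweight_BC m) = s * (if i \<le> m then 1 else 0) + t * (if j \<le> m then 1 else 0)"
    if "m < n" for m
    using that st by (simp add: w_eq ev_add_fun ev_fscale_fun ev_ee_coweight_BC)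
  then show ?thesis
    unfolding sign_coherent_def using st by auto
qed

subsection \<open>Types \<open>F\<^sub>4\<close> and \<open>G\<^sub>2\<close>\<close>

definition vec4 :: "real \<Rightarrow> real \<Rightarrow> real \<Rightarrow> real \<Rightarrow> nat \<Rightarrow> real" where
  "vec4 a b c d = (\<lambda>j. if j = 0 then a else if j = 1 then b else if j = 2 then c else if j = 3 then d else 0)"

definition simple_root_F4 :: "nat \<Rightarrow> nat \<Rightarrow> real" where
  "simple_root_F4 i =
     (if i = 0 then ee 1 - ee 2 else if i = 1 then ee 2 - ee 3 else if i = 2 then ee 3
      else fscale (1/2) (ee 0 - ee 1 - ee 2 - ee 3))"

definition fund_coweight_F4 :: "nat \<Rightarrow> nat \<Rightarrow> real" where
  "fund_coweight_F4 i =
     (if i = 0 then vec4 1 1 0 0 else if i = 1 then vec4 2 1 1 0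
      else if i = 2 then vec4 3 1 1 1 else vec4 2 0 0 0)"

lemma ev_4: "ev 4 f x = f 0 * x 0 + f 1 * x 1 + f 2 * x 2 + f 3 * x 3"
  by (simp add: ev_def eval_nat_numeral)

lemma sum_lessThan_4: "(\<Sum>i<(4::nat). g i) = g 0 + g 1 + g 2 + (g 3 :: real)"
  by (simp add: eval_nat_numeral)

lemma less_4_iff: "i < (4::nat) \<longleftrightarrow> i = 0 \<or> i = 1 \<or> i = 2 \<or> i = 3"
  by auto

lemma dual_bases_F4: "dual_bases 4 simple_root_F4 fund_coweight_F4"
proof
  show "\<And>i. i < 4 \<Longrightarrow> fund_coweight_F4 i \<in> En 4"
    by (auto simp: En_def fund_coweight_F4_def vec4_def)
  show "\<And>i j. i < 4 \<Longrightarrow> j < 4 \<Longrightarrow>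
          ev 4 (simple_root_F4 i) (fund_coweight_F4 j) = (if i = j then 1 else 0)"
    unfolding less_4_iff by (auto simp: ev_4 simple_root_F4_def fund_coweight_F4_def vec4_def ee_def)
  fix x k assume x: "x \<in> En 4"
  show "x k = (\<Sum>i<4. ev 4 (simple_root_F4 i) x * fund_coweight_F4 i k)"
  proof (cases "k < 4")
    case True
    then show ?thesis
      unfolding less_4_iff sum_lessThan_4
      by (auto simp: ev_4 simple_root_F4_def fund_coweight_F4_def vec4_def ee_def algebra_simps)
  next
    case False
    then show ?thesis
      using x unfolding sum_lessThan_4 by (simp add: En_def fund_coweight_F4_def vec4_def)
  qed
qed

lemma sign_coherent_weights_F4_26:
  assumes "w \<in> weights_F4_26" "nonzero_fun 4 w"
  shows "sign_coherent 4 fund_coweight_F4 w"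
proof -
  have nonneg: "0 \<le> fund_coweight_F4 m k" for m k
    by (auto simp: fund_coweight_F4_def vec4_def)
  consider i where "w = ee i" | i where "w = - ee i"
    | s where "w = (\<lambda>j. if j < 4 then s j / 2 else 0)" "\<forall>j. s j \<in> {1, -1}"
    using assms by (auto simp: weights_F4_26_def nonzero_fun_def)
  then show ?thesis
  proof cases
    case 1
    then show ?thesis by (simp add: sign_coherent_def ev_ee_fun nonneg)
  next
    case 2
    then show ?thesis by (simp add: sign_coherent_def ev_ee_fun ev_uminus_fun nonneg)
  next
    case (3 s)
    \<comment> \<open>The first coordinate of each coweight dominates the sum of the others.\<close>
    have ev_w: "ev 4 w (fund_coweight_F4 m) =
        (if m = 0 then (s 0 + s 1) / 2 else if m = 1 then (2 * s 0 + s 1 + s 2) / 2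
         else if m = 2 then (3 * s 0 + s 1 + s 2 + s 3) / 2 else s 0)" for m
      by (simp add: 3(1) ev_4 fund_coweight_F4_def vec4_def)
    have "\<bar>s j\<bar> = 1" for j
      using 3(2) by (auto dest: spec[of _ j])
    then have "\<bar>s 0\<bar> = 1" "\<bar>s 1\<bar> \<le> 1" "\<bar>s 2\<bar> \<le> 1" "\<bar>s 3\<bar> \<le> 1"
      by simp_all
    then show ?thesis
      unfolding sign_coherent_def ev_w by (cases "s 0 \<ge> 0") (auto simp: abs_if split: if_splits)
  qed
qed

lemma simplicial_arrangement_F4: "simplicial_arrangement 4 simple_root_F4 fund_coweight_F4 F4_26"
proof (rule simplicial_arrangementI[OF dual_bases_F4])
  show "simple_roots F4_26 = simple_root_F4 ` {..<4}"
    by (simp add: simple_root_F4_def eval_nat_numeral lessThan_Suc insert_commute)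
qed (use sign_coherent_weights_F4_26 in auto)

lemma simplicial_arrangement_G2: "simplicial_arrangement 2 ee ee G2_7"
proof (rule simplicial_arrangementI[OF dual_bases_ee])
  show "simple_roots G2_7 = ee ` {..<2}"
    by (simp add: eval_nat_numeral lessThan_Suc insert_commute)
  have less_2_iff: "i < (2::nat) \<longleftrightarrow> i = 0 \<or> i = 1" for i
    by auto
  show "\<And>w. w \<in> weights G2_7 \<Longrightarrow> nonzero_fun 2 w \<Longrightarrow> sign_coherent 2 ee w"
    unfolding sign_coherent_def less_2_iff by (auto simp: ev_ee weights_G2_7_def ee_apply)
qed simp

lemma simplicial_arrangement_exists:
  assumes "valid_pair p"
  shows "\<exists>a v. simplicial_arrangement (rank p) a v p"
proof (cases p)
  case (SO_odd_V m)
  then have "simplicial_arrangement m simple_root_BC fund_coweight_BC p"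
    using assms by (intro simplicial_arrangement_BC[of _ _ 1]) (auto intro: sign_coherent_weights_V_B)
  then show ?thesis
    using SO_odd_V by auto
next
  case (Sp_V m)
  then have "simplicial_arrangement m simple_root_BC fund_coweight_BC p"
    using assms by (intro simplicial_arrangement_BC[of _ _ 2]) (auto intro: sign_coherent_weights_V_C)
  then show ?thesis
    using Sp_V by auto
next
  case (Sp_Wedge2_0 m)
  then have "simplicial_arrangement m simple_root_BC fund_coweight_BC p"
    using assms by (intro simplicial_arrangement_BC[of _ _ 2]) (auto intro: sign_coherent_weights_W2_0)
  then show ?thesis
    using Sp_Wedge2_0 by auto
next
  case (Sp_V_Wedge2_0 m)
  then have "simplicial_arrangement m simple_root_BC fund_coweight_BC p"
    using assms
    by (intro simplicial_arrangement_BC[of _ _ 2])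
       (auto intro: sign_coherent_weights_W2_0 sign_coherent_weights_V_C)
  then show ?thesis
    using Sp_V_Wedge2_0 by auto
qed (use simplicial_arrangement_F4 simplicial_arrangement_G2 in auto)

theorem theorem1p27:
  fixes p :: pair and n :: nat
  assumes "valid_pair p" and "rank p = n"
  shows "(\<exists>v :: nat \<Rightarrow> nat \<Rightarrow> real.
            (\<forall>i<n. v i \<in> En n) \<and> inj_on v {..<n} \<and>
            \<not> module.dependent fscale (v ` {..<n}) \<and>
            chambers p = {simp_cone v {..<n}} \<and>
            {F. is_face p F} = {simp_cone v S | S. S \<subseteq> {..<n}})
       \<and> card (chambers p) = 1
       \<and> (\<forall>k. card {F. is_face p F \<and> span_dim F = k} = n choose k)
       \<and> (\<forall>k. card {F. is_flat p F \<and> span_dim F = k} = n choose k)"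
proof -
  obtain a v where "simplicial_arrangement n a v p"
    using simplicial_arrangement_exists[OF assms(1)] assms(2) by blast
  then show ?thesis
    by (rule simplicial_arrangement.cone_over_simplex)
qed

end
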